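(* Assume the setting and the algorithm FDGM-AA described in the context, with $\beta\in(0,1/L)$. Then for every $k\ge0$, $\sum_{i\in\mathcal V}w_i^{k}=0$ and $$ D(\mathbf w^{k+1})-D(\mathbf w^k)\le-\theta_1\sum_{\{i,j\}\in\mathcal E^k}h_{ij}^k\big\|\nabla d_i(w_i^k)-\nabla d_j(w_j^k)\big\|^2, $$ where $\theta_1=\min\{\beta(1-\beta L),c_1\}$. In particular $\{D(\mathbf w^k)\}_{k\ge0}$ is non-increasing.
   Context: Setting. Let $n,d\ge 1$ be integers and $\mathcal V=\{1,\dots,n\}$. For each $i\in\mathcal V$, $f_i:\mathbb R^d\to\mathbb R\cup\{+\infty\}$ is proper, lower semicontinuous and $\mu$-strongly convex for some $\mu>0$ (i.e. $f_i-\frac{\mu}{2}\|\cdot\|^2$ is convex), and the interior of $\bigcap_{i\in\mathcal V}\mathrm{dom} f_i$ is nonempty. Let $d_i(w)=\sup_{x\in\mathbb R^d}\{\langle w,x\rangle-f_i(x)\}$ be the convex conjugate of $f_i$; it is differentiable with $L$-Lipschitz gradient where $L=1/\mu$, and $\nabla d_i(w)=\arg\max_x\{\langle w,x\rangle-f_i(x)\}$. For $\mathbf w=(w_1,\dots,w_n)\in(\mathbb R^d)^n$ put $D(\mathbf w)=\sum_{i\in\mathcal V}d_i(w_i)$. Networks. $\mathcal G^k=(\mathcal V,\mathcal E^k)$, $k\ge0$, is a sequence of undirected graphs; $\mathcal N_i^k=\{j:\{i,j\}\in\mathcal E^k\}$. For each $\{i,j\}\in\mathcal E^k$ a weight $h_{ij}^k=h_{ji}^k>0$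 is given, with $\underline h:=\inf_{k\ge0}\min_{\{i,j\}\in\mathcal E^k}h_{ij}^k>0$ and $\sum_{j\in\mathcal N_i^k}h_{ij}^k\le 1$ for all $i,k$. Algorithm FDGM-AA. Parameters: step-size $\beta>0$, constants $c_1,c_2>0$, integer memory $m\ge1$. Initial point $w_1^0,\dots,w_n^0\in\mathbb R^d$ with $\sum_i w_i^0=0$. At iteration $k\ge0$, for each edge $\{i,j\}\in\mathcal E^k$: let $\mathcal I_{ij}^k=\mathcal I_{ji}^k$ be the set of the $\min\{m,N\}$ largest indices $t\le k$ with $\{i,j\}\in\mathcal E^t$, where $N$ is the number of such $t$ (so $k\in\mathcal I_{ij}^k$). Let $W_{ij}^k$ and $D_{ij}^k$ be the $d\times|\mathcal I_{ij}^k|$ matrices with columns $w_i^t$ and $\nabla d_i(w_i^t)$, $t\in\mathcal I_{ij}^k$, and define $W_{ji}^k$, $D_{ji}^k$ analogously with $w_j^t$, $\nabla d_j(w_j^t)$. Let $(\alpha_{ij}^k,\alpha_{ji}^k)$ be any minimizer of $\|D_{ij}^k\alpha_{ij}-D_{ji}^k\alpha_{ji}\|^2$ subject to $W_{ij}^k\alpha_{ij}+W_{ji}^k\alpha_{ji}=w_i^k+w_j^k$, $\mathbf 1^T\alpha_{ij}=1$, $\mathbf 1^T\alpha_{ji}=1$. Set $\tilde w_{ij}=W_{ij}^k\alpha_{ij}^k$, $\tilde w_{ji}=W_{ji}^k\alpha_{ji}^k$, $\bar w_{ij}=\tilde w_{ij}-\beta(D_{ij}^k\alpha_{ij}^k-D_{ji}^k\alpha_{ji}^k)$,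 $\bar w_{ji}=\tilde w_{ji}-\beta(D_{ji}^k\alpha_{ji}^k-D_{ij}^k\alpha_{ij}^k)$. Let $g=\nabla d_i(w_i^k)-\nabla d_j(w_j^k)$ and $\rho=\min\{-c_1\|g\|^2,\,-c_2(\|\bar w_{ij}-w_i^k\|^2+\|\bar w_{ji}-w_j^k\|^2)\}$. Safe-guard test (one of the following two, fixed for the whole run): (S1) $d_i(\bar w_{ij})+d_j(\bar w_{ji})-d_i(w_i^k)-d_j(w_j^k)\le\rho$; or (S2) $\langle\nabla d_i(w_i^k),\bar w_{ij}-w_i^k\rangle+\frac L2\|\bar w_{ij}-w_i^k\|^2+\langle\nabla d_j(w_j^k),\bar w_{ji}-w_j^k\rangle+\frac L2\|\bar w_{ji}-w_j^k\|^2\le\rho$. If the test holds, set $(w_{ij}^{k+\frac12},w_{ji}^{k+\frac12})=(\bar w_{ij},\bar w_{ji})$; otherwise set $w_{ij}^{k+\frac12}=w_i^k-\beta g$, $w_{ji}^{k+\frac12}=w_j^k+\beta g$. Finally, for every $i\in\mathcal V$, $w_i^{k+1}=(1-\sum_{j\in\mathcal N_i^k}h_{ij}^k)w_i^k+\sum_{j\in\mathcal N_i^k}h_{ij}^k w_{ij}^{k+\frac12}$. Write $\mathbf w^k=(w_1^k,\dots,w_n^k)$ and $x_i^k=\nabla d_i(w_i^k)$. *)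

theory Defs
  imports "HOL-Analysis.Analysis"
begin

text \<open>Functions R^d -> R \<union> {+\<infinity>} are modelled as maps into ereal that never take the value -\<infinity>.\<close>

definition ext_proper :: "('a \<Rightarrow> ereal) \<Rightarrow> bool" where
  "ext_proper f \<longleftrightarrow> (\<forall>x. f x \<noteq> -\<infinity>) \<and> (\<exists>x. f x \<noteq> \<infinity>)"

definition ext_lsc :: "('a::topological_space \<Rightarrow> ereal) \<Rightarrow> bool" where
  "ext_lsc f \<longleftrightarrow> (\<forall>c. closed {x. f x \<le> c})"

definition ext_convex :: "('a::real_vector \<Rightarrow> ereal) \<Rightarrow> bool" where
  "ext_convex g \<longleftrightarrow> (\<forall>x y t. 0 < t \<and> t < 1 \<longrightarrow>
       g ((1 - t) *\<^sub>R x + t *\<^sub>R y) \<le> ereal (1 - t) * g x + ereal t * g y)"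

definition strongly_convex :: "real \<Rightarrow> ('a::real_normed_vector \<Rightarrow> ereal) \<Rightarrow> bool" where
  "strongly_convex \<mu> f \<longleftrightarrow> ext_convex (\<lambda>x. f x - ereal (\<mu> / 2 * (norm x)\<^sup>2))"

definition edom :: "('a \<Rightarrow> ereal) \<Rightarrow> 'a set" where
  "edom f = {x. f x < \<infinity>}"

text \<open>Convex conjugate d(w) = sup_x <w,x> - f(x) (real-valued in the setting of the paper).\<close>
definition conj :: "('a::real_inner \<Rightarrow> ereal) \<Rightarrow> 'a \<Rightarrow> real" where
  "conj f w = real_of_ereal (SUP x. ereal (w \<bullet> x) - f x)"

text \<open>Gradient of the conjugate: the (unique) maximiser of <w,x> - f(x).\<close>
definition conj_grad :: "('a::real_inner \<Rightarrow> ereal) \<Rightarrow> 'a \<Rightarrow> 'a" where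
  "conj_grad f w = (THE x. \<forall>y. ereal (w \<bullet> y) - f y \<le> ereal (w \<bullet> x) - f x)"

text \<open>Memory index set I_ij^k: the min{m,N} largest times t \<le> k at which {i,j} is an edge.\<close>
definition mem_idx :: "(nat \<Rightarrow> nat set set) \<Rightarrow> nat \<Rightarrow> nat \<Rightarrow> nat \<Rightarrow> nat \<Rightarrow> nat set" where
  "mem_idx E m k i j = {t. t \<le> k \<and> {i, j} \<in> E t \<and>
        card {s. t < s \<and> s \<le> k \<and> {i, j} \<in> E s} < m}"

definition comb_w :: "(nat \<Rightarrow> nat \<Rightarrow> 'a::real_vector) \<Rightarrow> nat set \<Rightarrow> nat \<Rightarrow> (nat \<Rightarrow> real) \<Rightarrow> 'a" where
  "comb_w w I i a = (\<Sum>t\<in>I. a t *\<^sub>R w t i)"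

definition comb_g :: "(nat \<Rightarrow> 'a::real_inner \<Rightarrow> ereal) \<Rightarrow> (nat \<Rightarrow> nat \<Rightarrow> 'a) \<Rightarrow> nat set \<Rightarrow> nat \<Rightarrow> (nat \<Rightarrow> real) \<Rightarrow> 'a" where
  "comb_g f w I i a = (\<Sum>t\<in>I. a t *\<^sub>R conj_grad (f i) (w t i))"

definition aa_feasible where
  "aa_feasible E m w k i j a b \<longleftrightarrow>
     (let I = mem_idx E m k i j in
       comb_w w I i a + comb_w w I j b = w k i + w k j \<and>
       (\<Sum>t\<in>I. a t) = 1 \<and> (\<Sum>t\<in>I. b t) = 1)"

definition aa_obj where
  "aa_obj f E m w k i j a b =
     (let I = mem_idx E m k i j in (norm (comb_g f w I i a - comb_g f w I j b))\<^sup>2)"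

definition aa_minimizer where
  "aa_minimizer f E m w k i j a b \<longleftrightarrow>
     aa_feasible E m w k i j a b \<and>
     (\<forall>a' b'. aa_feasible E m w k i j a' b' \<longrightarrow>
        aa_obj f E m w k i j a b \<le> aa_obj f E m w k i j a' b')"

definition wbar where
  "wbar f E m \<beta> w alpha k i j =
     (let I = mem_idx E m k i j in
       comb_w w I i (alpha k i j)
       - \<beta> *\<^sub>R (comb_g f w I i (alpha k i j) - comb_g f w I j (alpha k j i)))"

definition rho where
  "rho f E m \<beta> c1 c2 w alpha k i j =
     min (- c1 * (norm (conj_grad (f i) (w k i) - conj_grad (f j) (w k j)))\<^sup>2)
         (- c2 * ((norm (wbar f E m \<beta> w alpha k i j - w k i))\<^sup>2
                 + (norm (wbar f E m \<beta> w alpha k j i - w k j))\<^sup>2))"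

text \<open>Safeguard test; S1 = True selects (S1), S1 = False selects (S2).\<close>
definition safeguard where
  "safeguard S1 L f E m \<beta> c1 c2 w alpha k i j \<longleftrightarrow>
     (let bi = wbar f E m \<beta> w alpha k i j; bj = wbar f E m \<beta> w alpha k j i;
          r = rho f E m \<beta> c1 c2 w alpha k i j in
      if S1 then
        conj (f i) bi + conj (f j) bj - conj (f i) (w k i) - conj (f j) (w k j) \<le> r
      else
        conj_grad (f i) (w k i) \<bullet> (bi - w k i) + L / 2 * (norm (bi - w k i))\<^sup>2
        + conj_grad (f j) (w k j) \<bullet> (bj - w k j) + L / 2 * (norm (bj - w k j))\<^sup>2 \<le> r)"

definition half_step where
  "half_step S1 L f E m \<beta> c1 c2 w alpha k i j =
     (if safeguard S1 L f E m \<beta> c1 c2 w alpha k i j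
      then wbar f E m \<beta> w alpha k i j
      else w k i - \<beta> *\<^sub>R (conj_grad (f i) (w k i) - conj_grad (f j) (w k j)))"

definition nbrs :: "(nat \<Rightarrow> nat set set) \<Rightarrow> nat \<Rightarrow> nat \<Rightarrow> nat set" where
  "nbrs E k i = {j. {i, j} \<in> E k}"

definition Dual :: "nat \<Rightarrow> (nat \<Rightarrow> 'a::real_inner \<Rightarrow> ereal) \<Rightarrow> (nat \<Rightarrow> 'a) \<Rightarrow> real" where
  "Dual n f v = (\<Sum>i\<in>{1..n}. conj (f i) (v i))"

end

(* Each f_i is proper, lsc and mu-strongly convex, so <w,x> - f_i(x) has a unique maximiser
   grad d_i(w), the conjugate d_i is finite and convex, and it obeys the descent inequality
   d_i(v) <= d_i(u) + <grad d_i(u), v - u> + L/2 |v - u|^2 with L = 1/mu.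
   On every edge both half steps keep w_i + w_j fixed (the Anderson constraint, resp. the
   antisymmetric gradient step), so the symmetric averaging conserves sum_i w_i.
   By convexity of d_i the change of D is at most the h-weighted sum over edges of the change
   of d_i + d_j in the half step; the safeguard bounds this by -c1 |g|^2, and the descent
   inequality bounds the fallback gradient step by -beta (1 - beta L) |g|^2. *)

theory Submission
  imports Defs
begin

lemma norm_convex_combination_sq:
  fixes x y :: "'a::real_inner"
  shows "(norm ((1 - t) *\<^sub>R x + t *\<^sub>R y))\<^sup>2
         = (1 - t) * (norm x)\<^sup>2 + t * (norm y)\<^sup>2 - t * (1 - t) * (norm (x - y))\<^sup>2"
  unfolding power2_norm_eq_inner
  by (simp add: inner_diff_left inner_diff_right inner_commute algebra_simps power2_eq_square)

lemma inner_minus_quadratic_le: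
  fixes u z :: "'a::real_inner"
  assumes "\<mu> > 0"
  shows "u \<bullet> z - \<mu> / 2 * (norm z)\<^sup>2 \<le> (norm u)\<^sup>2 / (2 * \<mu>)"
proof -
  have "0 \<le> (norm (\<mu> *\<^sub>R z - u))\<^sup>2" by simp
  also have "\<dots> = \<mu> * \<mu> * (norm z)\<^sup>2 - 2 * \<mu> * (u \<bullet> z) + (norm u)\<^sup>2"
    unfolding power2_norm_eq_inner
    by (simp add: inner_diff_left inner_diff_right inner_commute algebra_simps)
  finally show ?thesis
    using assms by (simp add: field_simps)
qed

lemma quadratic_le_imp_le:
  fixes a b K R :: real
  assumes "a > 0" "b \<ge> 0" "R \<ge> 0" and quad: "a * R\<^sup>2 - b * R \<le> K"
  shows "R \<le> (b + \<bar>K\<bar>) / a + 1"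
proof (rule ccontr)
  assume "\<not> ?thesis"
  then have R_gt: "R > (b + \<bar>K\<bar>) / a + 1" by simp
  then have aR: "a * R > b + \<bar>K\<bar> + a"
    using \<open>a > 0\<close> by (simp add: field_simps)
  have "(b + \<bar>K\<bar>) / a \<ge> 0" using assms by simp
  then have "R \<ge> 1" using R_gt by linarith
  then have "1 * (a * R - b) \<le> R * (a * R - b)"
    using aR \<open>a > 0\<close> abs_ge_zero[of K] by (intro mult_right_mono) auto
  then have "a * R - b \<le> R * (a * R - b)" by simp
  also have "\<dots> = a * R\<^sup>2 - b * R" by (simp add: power2_eq_square algebra_simps)
  also have "\<dots> \<le> \<bar>K\<bar>" using quad by linarith
  finally show False using aR \<open>a > 0\<close> by linarith
qed

locale proper_lsc_strongly_convex =
  fixes f :: "'a::euclidean_space \<Rightarrow> ereal" and \<mu> :: real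
  assumes f_proper: "ext_proper f" and f_lsc: "ext_lsc f"
    and f_strongly_convex: "strongly_convex \<mu> f" and mu_pos: "\<mu> > 0"
begin

lemma not_minf: "f x \<noteq> -\<infinity>"
  using f_proper unfolding ext_proper_def by auto

lemma ex_finite_value: "\<exists>x a. f x = ereal a"
proof -
  obtain x where "f x \<noteq> \<infinity>" using f_proper unfolding ext_proper_def by auto
  then show ?thesis using not_minf[of x] by (cases "f x") auto
qed

lemma strong_convexity:
  assumes fx: "f x = ereal a" and fy: "f y = ereal b" and t: "0 < t" "t < 1"
  shows "\<exists>c. f ((1 - t) *\<^sub>R x + t *\<^sub>R y) = ereal c \<and>
           c \<le> (1 - t) * a + t * b - \<mu> / 2 * (t * (1 - t) * (norm (x - y))\<^sup>2)"
proof -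
  define z where "z = (1 - t) *\<^sub>R x + t *\<^sub>R y"
  have "f z - ereal (\<mu> / 2 * (norm z)\<^sup>2)
        \<le> ereal (1 - t) * (f x - ereal (\<mu> / 2 * (norm x)\<^sup>2))
          + ereal t * (f y - ereal (\<mu> / 2 * (norm y)\<^sup>2))"
    using f_strongly_convex t unfolding strongly_convex_def ext_convex_def z_def by blast
  also have "\<dots> = ereal ((1 - t) * (a - \<mu> / 2 * (norm x)\<^sup>2) + t * (b - \<mu> / 2 * (norm y)\<^sup>2))"
    using fx fy by simp
  finally have le: "f z - ereal (\<mu> / 2 * (norm z)\<^sup>2)
      \<le> ereal ((1 - t) * (a - \<mu> / 2 * (norm x)\<^sup>2) + t * (b - \<mu> / 2 * (norm y)\<^sup>2))" .
  then obtain c where c: "f z = ereal c"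
    using not_minf[of z] by (cases "f z") auto
  with le have "c \<le> (1 - t) * (a - \<mu> / 2 * (norm x)\<^sup>2) + t * (b - \<mu> / 2 * (norm y)\<^sup>2)
                    + \<mu> / 2 * (norm z)\<^sup>2"
    by simp
  also have "\<dots> = (1 - t) * a + t * b - \<mu> / 2 * (t * (1 - t) * (norm (x - y))\<^sup>2)"
    unfolding z_def norm_convex_combination_sq by (simp add: field_simps)
  finally show ?thesis using c z_def by blast
qed

lemma lower_bound_near:
  assumes "f x0 = ereal a"
  obtains r where "r > 0" "\<And>y. dist y x0 < r \<Longrightarrow> f y > ereal (a - 1)"
proof -
  have "open (- {x. f x \<le> ereal (a - 1)})"
    using f_lsc unfolding ext_lsc_def by blast
  moreover have "x0 \<in> - {x. f x \<le> ereal (a - 1)}" using assms by simp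
  ultimately obtain r where "r > 0" "ball x0 r \<subseteq> - {x. f x \<le> ereal (a - 1)}"
    using open_contains_ball by blast
  then show ?thesis using that by (auto simp: dist_commute subset_iff not_le)
qed

text \<open>Strong convexity along the segment from x0 to x, evaluated at distance r/2 from x0,
  turns the local lower bound near x0 into a quadratic lower bound everywhere.\<close>
lemma quadratic_minorant:
  assumes fx0: "f x0 = ereal a" and r: "r > 0"
    and near: "\<And>y. dist y x0 < r \<Longrightarrow> f y > ereal (a - 1)"
    and fx: "f x = ereal v"
  shows "v \<ge> a - 1 - 2 / r * norm (x - x0) + \<mu> / 4 * (norm (x - x0))\<^sup>2 - \<mu> / 4 * r\<^sup>2"
proof (cases "norm (x - x0) < r")
  case True
  then have "f x > ereal (a - 1)" using near by (simp add: dist_norm)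
  then have "v > a - 1" using fx by simp
  moreover have "(norm (x - x0))\<^sup>2 \<le> r\<^sup>2" using True by (intro power_mono) auto
  then have "\<mu> / 4 * (norm (x - x0))\<^sup>2 \<le> \<mu> / 4 * r\<^sup>2" using mu_pos by simp
  moreover have "2 / r * norm (x - x0) \<ge> 0" using r by simp
  ultimately show ?thesis by linarith
next
  case False
  define R where "R = norm (x - x0)"
  have "R \<ge> r" using False R_def by simp
  then have R_pos: "R > 0" using r by simp
  define t where "t = r / (2 * R)"
  have t0: "t > 0" and t_half: "t \<le> 1 / 2"
    using \<open>R \<ge> r\<close> r R_pos unfolding t_def by (simp_all add: field_simps)
  obtain c where c: "f ((1 - t) *\<^sub>R x0 + t *\<^sub>R x) = ereal c"
      "c \<le> (1 - t) * a + t * v - \<mu> / 2 * (t * (1 - t) * R\<^sup>2)"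
    using strong_convexity[OF fx0 fx t0] t_half
    by (auto simp: R_def norm_minus_commute)
  have "(1 - t) *\<^sub>R x0 + t *\<^sub>R x - x0 = t *\<^sub>R (x - x0)" by (simp add: algebra_simps)
  then have "dist ((1 - t) *\<^sub>R x0 + t *\<^sub>R x) x0 = r / 2"
    using t0 R_pos r unfolding dist_norm R_def t_def by simp
  then have "c > a - 1" using near[of "(1 - t) *\<^sub>R x0 + t *\<^sub>R x"] c(1) r by simp
  moreover have "t * (v - (a - 1 / t + \<mu> / 2 * (1 - t) * R\<^sup>2))
      = (1 - t) * a + t * v - \<mu> / 2 * (t * (1 - t) * R\<^sup>2) - (a - 1)"
    using t0 by (simp add: field_simps)
  ultimately have "t * (v - (a - 1 / t + \<mu> / 2 * (1 - t) * R\<^sup>2)) > 0"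
    using c(2) by linarith
  then have v: "v > a - 1 / t + \<mu> / 2 * (1 - t) * R\<^sup>2"
    using t0 by (simp add: zero_less_mult_iff)
  have "1 / t = 2 / r * R" unfolding t_def using r R_pos by simp
  moreover have "\<mu> / 2 * (1 - t) * R\<^sup>2 - \<mu> / 4 * R\<^sup>2 = \<mu> / 2 * R\<^sup>2 * (1 / 2 - t)"
    by (simp add: field_simps)
  moreover have "\<mu> / 2 * R\<^sup>2 * (1 / 2 - t) \<ge> 0" using mu_pos t_half by simp
  moreover have "\<mu> / 4 * r\<^sup>2 \<ge> 0" using mu_pos by simp
  ultimately show ?thesis using v unfolding R_def by linarith
qed

lemma bounded_tilted_sublevel: "bounded {x. f x \<le> ereal (c + w \<bullet> x)}"
proof -
  obtain x0 a where fx0: "f x0 = ereal a" using ex_finite_value by blast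
  obtain r where r: "r > 0" "\<And>y. dist y x0 < r \<Longrightarrow> f y > ereal (a - 1)"
    using lower_bound_near[OF fx0] by blast
  define K where "K = c + norm w * norm x0 - a + 1 + \<mu> / 4 * r\<^sup>2"
  define B where "B = ((2 / r + norm w) + \<bar>K\<bar>) / (\<mu> / 4) + 1"
  have "{x. f x \<le> ereal (c + w \<bullet> x)} \<subseteq> cball x0 B"
  proof
    fix x assume "x \<in> {x. f x \<le> ereal (c + w \<bullet> x)}"
    then have le: "f x \<le> ereal (c + w \<bullet> x)" by simp
    then obtain v where fx: "f x = ereal v" using not_minf[of x] by (cases "f x") auto
    define R where "R = norm (x - x0)"
    have "norm x \<le> norm x0 + R" unfolding R_def by (metis add.commute norm_triangle_sub)
    then have "norm w * norm x \<le> norm w * (norm x0 + R)" by (simp add: mult_left_mono)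
    then have "w \<bullet> x \<le> norm w * norm x0 + norm w * R"
      using norm_cauchy_schwarz[of w x] by (simp add: algebra_simps)
    moreover have "v \<ge> a - 1 - 2 / r * R + \<mu> / 4 * R\<^sup>2 - \<mu> / 4 * r\<^sup>2"
      using quadratic_minorant[OF fx0 r fx] unfolding R_def .
    ultimately have "\<mu> / 4 * R\<^sup>2 - (2 / r + norm w) * R \<le> K"
      using le fx unfolding K_def by (simp add: algebra_simps)
    then have "R \<le> B" unfolding B_def
      by (intro quadratic_le_imp_le) (use mu_pos r in \<open>auto simp: R_def\<close>)
    then show "x \<in> cball x0 B" unfolding R_def by (simp add: dist_norm norm_minus_commute)
  qed
  then show ?thesis using bounded_cball bounded_subset by blast
qed

lemma closed_tilted_sublevel: "closed {x. f x \<le> ereal (c + w \<bullet> x)}"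
proof -
  have "open {x. ereal (c + w \<bullet> x) < f x}"
  proof (rule Topological_Spaces.openI)
    fix x assume "x \<in> {x. ereal (c + w \<bullet> x) < f x}"
    then obtain b where b: "ereal (c + w \<bullet> x) < ereal b" "ereal b < f x"
      using ereal_dense2 by blast
    define T where "T = {y. ereal b < f y} \<inter> {y. c + w \<bullet> y < b}"
    have "open (- {y. f y \<le> ereal b})" using f_lsc unfolding ext_lsc_def by blast
    moreover have "- {y. f y \<le> ereal b} = {y. ereal b < f y}" by auto
    ultimately have "open T" unfolding T_def
      by (auto intro!: open_Int open_Collect_less continuous_intros)
    moreover have "x \<in> T" unfolding T_def using b by simp
    moreover have "T \<subseteq> {x. ereal (c + w \<bullet> x) < f x}"
    proof
      fix y assume "y \<in> T"
      then have "ereal (c + w \<bullet> y) < ereal b" "ereal b < f y" unfolding T_def by auto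
      then show "y \<in> {x. ereal (c + w \<bullet> x) < f x}"
        using less_trans[of "ereal (c + w \<bullet> y)" "ereal b" "f y"] by simp
    qed
    ultimately show "\<exists>T. open T \<and> x \<in> T \<and> T \<subseteq> {x. ereal (c + w \<bullet> x) < f x}" by blast
  qed
  moreover have "- {x. f x \<le> ereal (c + w \<bullet> x)} = {x. ereal (c + w \<bullet> x) < f x}" by auto
  ultimately show ?thesis by (metis closed_def)
qed

lemma ex_conj_maximiser:
  "\<exists>x. f x \<noteq> \<infinity> \<and> (\<forall>y. ereal (w \<bullet> y) - f y \<le> ereal (w \<bullet> x) - f x)"
proof -
  define S where "S c = {x. f x \<le> ereal (c + w \<bullet> x)}" for c
  obtain x0 a where fx0: "f x0 = ereal a" using ex_finite_value by blast
  define c0 where "c0 = a - w \<bullet> x0"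
  have x0_S: "x0 \<in> S c0" unfolding S_def c0_def using fx0 by simp
  have S_mono: "S c \<subseteq> S c'" if "c \<le> c'" for c c'
    unfolding S_def using that by (auto intro: order_trans)
  have "compact (S c0)" unfolding S_def
    using bounded_tilted_sublevel closed_tilted_sublevel compact_eq_bounded_closed by blast
  then have "S c0 \<inter> \<Inter>(S ` {c. S c \<noteq> {}}) \<noteq> {}"
  proof (rule compact_imp_fip)
    show "closed T" if "T \<in> S ` {c. S c \<noteq> {}}" for T
      using that closed_tilted_sublevel unfolding S_def by blast
  next
    fix F assume "finite F" "F \<subseteq> S ` {c. S c \<noteq> {}}"
    then obtain C where C: "C \<subseteq> {c. S c \<noteq> {}}" "finite C" "F = S ` C"
      using finite_subset_image by metis
    define c_min where "c_min = Min (insert c0 C)"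
    have "c_min \<in> insert c0 C" unfolding c_min_def using C(2) by (intro Min_in) auto
    then obtain z where "z \<in> S c_min" using C(1) x0_S by auto
    then have "z \<in> S c" if "c \<in> insert c0 C" for c
      using S_mono[of c_min c] that C(2) unfolding c_min_def by auto
    then show "S c0 \<inter> \<Inter> F \<noteq> {}" using C(3) by blast
  qed
  then obtain x where x: "x \<in> S c0" "\<And>c. S c \<noteq> {} \<Longrightarrow> x \<in> S c" by blast
  then obtain v where fx: "f x = ereal v"
    using not_minf[of x] unfolding S_def by (cases "f x") auto
  have x_max: "ereal (w \<bullet> y) - f y \<le> ereal (w \<bullet> x) - f x" for y
  proof (cases "f y")
    case (real u)
    then have "y \<in> S (u - w \<bullet> y)" unfolding S_def by simp
    then have "x \<in> S (u - w \<bullet> y)" using x(2) by blast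
    then show ?thesis using real fx unfolding S_def by simp
  qed (use not_minf in auto)
  moreover have "f x \<noteq> \<infinity>" using fx by simp
  ultimately show ?thesis by blast
qed

lemma maximiser_finite:
  assumes "\<forall>y. ereal (w \<bullet> y) - f y \<le> ereal (w \<bullet> p) - f p"
  shows "f p \<noteq> \<infinity>"
proof
  assume "f p = \<infinity>"
  obtain x0 a where "f x0 = ereal a" using ex_finite_value by blast
  with assms have "ereal (w \<bullet> x0) - ereal a \<le> ereal (w \<bullet> p) - f p" by metis
  with \<open>f p = \<infinity>\<close> show False by simp
qed

text \<open>Compare p with the points (1 - t) p + t y of the segment and let t tend to 0.\<close>
lemma maximiser_quadratic_gap:
  assumes fp: "f p = ereal vp" and p_max: "\<forall>y. ereal (w \<bullet> y) - f y \<le> ereal (w \<bullet> p) - f p"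
    and fy: "f y = ereal vy"
  shows "w \<bullet> y - vy \<le> (w \<bullet> p - vp) - \<mu> / 2 * (norm (y - p))\<^sup>2"
proof -
  define D where "D = (norm (y - p))\<^sup>2"
  define gap where "gap = (w \<bullet> p - vp) - (w \<bullet> y - vy)"
  have gap_ge: "gap \<ge> \<mu> / 2 * D - \<mu> / 2 * (t * D)" if t: "0 < t" "t < 1" for t
  proof -
    obtain c where c: "f ((1 - t) *\<^sub>R p + t *\<^sub>R y) = ereal c"
        "c \<le> (1 - t) * vp + t * vy - \<mu> / 2 * (t * (1 - t) * D)"
      using strong_convexity[OF fp fy t] unfolding D_def by (auto simp: norm_minus_commute)
    have "ereal (w \<bullet> ((1 - t) *\<^sub>R p + t *\<^sub>R y)) - f ((1 - t) *\<^sub>R p + t *\<^sub>R y)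
          \<le> ereal (w \<bullet> p) - f p"
      using p_max by blast
    then have "(1 - t) * (w \<bullet> p) + t * (w \<bullet> y) - c \<le> w \<bullet> p - vp"
      using c(1) fp by (simp add: inner_add_right)
    then have "t * (gap - (\<mu> / 2 * D - \<mu> / 2 * (t * D))) \<ge> 0"
      using c(2) unfolding gap_def by (simp add: field_simps)
    then show ?thesis using t by (simp add: zero_le_mult_iff)
  qed
  have "gap \<ge> \<mu> / 2 * D"
  proof (rule ccontr)
    assume "\<not> ?thesis"
    then have \<delta>: "\<mu> / 2 * D - gap > 0" by simp
    show False
    proof (cases "D = 0")
      case True
      then show False using gap_ge[of "1/2"] \<delta> by simp
    next
      case False
      then have "D > 0" unfolding D_def by simp
      define t where "t = min (1 / 2) ((\<mu> / 2 * D - gap) / (\<mu> * D))"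
      have t: "0 < t" "t < 1" unfolding t_def using \<delta> mu_pos \<open>D > 0\<close> by auto
      have "\<mu> / 2 * (t * D) \<le> \<mu> / 2 * ((\<mu> / 2 * D - gap) / (\<mu> * D) * D)"
        using mu_pos \<open>D > 0\<close> unfolding t_def by (intro mult_left_mono mult_right_mono) auto
      also have "\<dots> = (\<mu> / 2 * D - gap) / 2" using mu_pos \<open>D > 0\<close> by (simp add: field_simps)
      finally show False using gap_ge[OF t] \<delta> by (simp add: field_simps)
    qed
  qed
  then show ?thesis unfolding gap_def D_def by linarith
qed

lemma conj_grad_maximiser:
  obtains v where "f (conj_grad f w) = ereal v" "conj f w = w \<bullet> conj_grad f w - v"
    "\<And>y. ereal (w \<bullet> y) - f y \<le> ereal (w \<bullet> conj_grad f w) - f (conj_grad f w)"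
proof -
  obtain p where p: "f p \<noteq> \<infinity>" "\<forall>y. ereal (w \<bullet> y) - f y \<le> ereal (w \<bullet> p) - f p"
    using ex_conj_maximiser by blast
  obtain vp where vp: "f p = ereal vp" using p(1) not_minf[of p] by (cases "f p") auto
  have "conj_grad f w = p" unfolding conj_grad_def
  proof (rule the_equality)
    fix q assume q: "\<forall>y. ereal (w \<bullet> y) - f y \<le> ereal (w \<bullet> q) - f q"
    obtain vq where vq: "f q = ereal vq"
      using maximiser_finite[OF q] not_minf[of q] by (cases "f q") auto
    have "w \<bullet> q - vq \<le> (w \<bullet> p - vp) - \<mu> / 2 * (norm (q - p))\<^sup>2"
      using maximiser_quadratic_gap[OF vp p(2) vq] .
    moreover have "w \<bullet> p - vp \<le> w \<bullet> q - vq" using q vp vq by (metis ereal_minus(1) ereal_less_eq(3))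
    ultimately have "\<mu> / 2 * (norm (q - p))\<^sup>2 \<le> 0" by linarith
    then have "(norm (q - p))\<^sup>2 \<le> 0" using mu_pos by (simp add: mult_le_0_iff)
    then show "q = p" by simp
  qed (use p(2) in blast)
  moreover have "(SUP x. ereal (w \<bullet> x) - f x) = ereal (w \<bullet> p) - f p"
    by (rule antisym) (use p(2) in \<open>auto intro: SUP_least SUP_upper2\<close>)
  ultimately show ?thesis using that vp p(2) unfolding conj_def by auto
qed

lemma fenchel_young:
  assumes "f y = ereal v"
  shows "w \<bullet> y - v \<le> conj f w"
proof -
  obtain u where "f (conj_grad f w) = ereal u" "conj f w = w \<bullet> conj_grad f w - u"
    "ereal (w \<bullet> y) - f y \<le> ereal (w \<bullet> conj_grad f w) - f (conj_grad f w)"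
    using conj_grad_maximiser by metis
  then show ?thesis using assms by simp
qed

lemma conj_descent:
  "conj f v \<le> conj f w + conj_grad f w \<bullet> (v - w) + (norm (v - w))\<^sup>2 / (2 * \<mu>)"
proof -
  define P where "P = conj_grad f w"
  define X where "X = conj_grad f v"
  obtain vp where p: "f P = ereal vp" "conj f w = w \<bullet> P - vp"
    "\<And>y. ereal (w \<bullet> y) - f y \<le> ereal (w \<bullet> P) - f P"
    using conj_grad_maximiser unfolding P_def by metis
  obtain vx where x: "f X = ereal vx" "conj f v = v \<bullet> X - vx"
    using conj_grad_maximiser unfolding X_def by metis
  have "w \<bullet> X - vx \<le> (w \<bullet> P - vp) - \<mu> / 2 * (norm (X - P))\<^sup>2"
    using maximiser_quadratic_gap[OF p(1) _ x(1)] p(3) by blast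
  moreover have "(v - w) \<bullet> (X - P) - \<mu> / 2 * (norm (X - P))\<^sup>2 \<le> (norm (v - w))\<^sup>2 / (2 * \<mu>)"
    using inner_minus_quadratic_le[OF mu_pos] .
  moreover have "conj f v = w \<bullet> X - vx + (v - w) \<bullet> P + (v - w) \<bullet> (X - P)"
    using x(2) by (simp add: inner_diff_left inner_diff_right)
  ultimately show ?thesis using p(2) unfolding P_def by (simp add: inner_commute)
qed

lemma conj_convex_combination:
  fixes J :: "'b set" and t :: "'b \<Rightarrow> real" and u :: "'b \<Rightarrow> 'a"
  assumes "finite J" and weights_nonneg: "\<And>j. j \<in> J \<Longrightarrow> t j \<ge> 0" and weights_sum: "sum t J \<le> 1"
  shows "conj f ((1 - sum t J) *\<^sub>R a + (\<Sum>j\<in>J. t j *\<^sub>R u j))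
         \<le> (1 - sum t J) * conj f a + (\<Sum>j\<in>J. t j * conj f (u j))"
proof -
  define c where "c = (1 - sum t J) *\<^sub>R a + (\<Sum>j\<in>J. t j *\<^sub>R u j)"
  define X where "X = conj_grad f c"
  obtain v where x: "f X = ereal v" "conj f c = c \<bullet> X - v"
    using conj_grad_maximiser unfolding X_def by metis
  have "c \<bullet> X = (1 - sum t J) * (a \<bullet> X) + (\<Sum>j\<in>J. t j * (u j \<bullet> X))"
    unfolding c_def by (simp add: inner_add_left inner_sum_left)
  moreover have "(\<Sum>j\<in>J. t j * (u j \<bullet> X - v)) = (\<Sum>j\<in>J. t j * (u j \<bullet> X)) - sum t J * v"
    by (simp add: right_diff_distrib sum_subtractf sum_distrib_right)
  ultimately have "conj f c = (1 - sum t J) * (a \<bullet> X - v) + (\<Sum>j\<in>J. t j * (u j \<bullet> X - v))"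
    using x(2) by (simp add: algebra_simps)
  also have "\<dots> \<le> (1 - sum t J) * conj f a + (\<Sum>j\<in>J. t j * conj f (u j))"
    using fenchel_young[OF x(1)] weights_nonneg weights_sum
    by (intro add_mono mult_left_mono sum_mono) auto
  finally show ?thesis unfolding c_def .
qed

end

definition edge_pairs :: "nat \<Rightarrow> nat set set \<Rightarrow> (nat \<times> nat) set" where
  "edge_pairs n F = {(i, j). i \<in> {1..n} \<and> j \<in> {1..n} \<and> i < j \<and> {i, j} \<in> F}"

lemma edge_endpoints:
  assumes "\<forall>e\<in>F. e \<subseteq> {1..n} \<and> card e = 2" and "{i, j} \<in> F"
  shows "i \<in> {1..n}" "j \<in> {1..n}" "i \<noteq> j"
proof -
  have "{i, j} \<subseteq> {1..n}" "card {i, j} = 2" using assms by auto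
  moreover have "card {i, i} = 1" by simp
  ultimately show "i \<in> {1..n}" "j \<in> {1..n}" "i \<noteq> j" by auto
qed

lemma finite_nbrs:
  assumes "\<forall>e\<in>E k. e \<subseteq> {1..n} \<and> card e = 2"
  shows "finite (nbrs E k i)"
proof (rule finite_subset)
  show "nbrs E k i \<subseteq> {1..n}" using edge_endpoints[OF assms] unfolding nbrs_def by blast
qed simp

lemma sum_nbrs_eq_sum_edge_pairs:
  fixes F :: "nat \<Rightarrow> nat \<Rightarrow> 'b::comm_monoid_add"
  assumes edges: "\<forall>e\<in>E k. e \<subseteq> {1..n} \<and> card e = 2"
  shows "(\<Sum>i\<in>{1..n}. \<Sum>j\<in>nbrs E k i. F i j) = (\<Sum>(i, j)\<in>edge_pairs n (E k). F i j + F j i)"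
proof -
  let ?P = "edge_pairs n (E k)"
  have "finite ?P"
    by (rule finite_subset[of _ "{1..n} \<times> {1..n}"]) (auto simp: edge_pairs_def)
  moreover have "Sigma {1..n} (nbrs E k) = ?P \<union> prod.swap ` ?P"
  proof (intro set_eqI iffI)
    fix x assume "x \<in> Sigma {1..n} (nbrs E k)"
    then obtain i j where x: "x = (i, j)" "{i, j} \<in> E k" by (auto simp: nbrs_def)
    then have "i \<in> {1..n}" "j \<in> {1..n}" "i \<noteq> j" using edge_endpoints[OF edges] by blast+
    then have "(i, j) \<in> ?P \<or> (j, i) \<in> ?P"
      using x(2) by (auto simp: edge_pairs_def insert_commute)
    then show "x \<in> ?P \<union> prod.swap ` ?P"
      using x(1) rev_image_eqI[of "(j, i)" ?P "(i, j)" prod.swap] by auto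
  next
    fix x assume "x \<in> ?P \<union> prod.swap ` ?P"
    then show "x \<in> Sigma {1..n} (nbrs E k)"
      by (auto simp: edge_pairs_def nbrs_def insert_commute)
  qed
  moreover have "?P \<inter> prod.swap ` ?P = {}" by (auto simp: edge_pairs_def)
  ultimately have "(\<Sum>(i, j)\<in>Sigma {1..n} (nbrs E k). F i j)
      = (\<Sum>(i, j)\<in>?P. F i j) + (\<Sum>(i, j)\<in>prod.swap ` ?P. F i j)"
    by (simp add: sum.union_disjoint)
  then have "(\<Sum>i\<in>{1..n}. \<Sum>j\<in>nbrs E k i. F i j)
      = (\<Sum>(i, j)\<in>?P. F i j) + (\<Sum>(i, j)\<in>prod.swap ` ?P. F i j)"
    using finite_nbrs[of E k n, OF edges] by (simp add: sum.Sigma)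
  also have "(\<Sum>(i, j)\<in>prod.swap ` ?P. F i j) = (\<Sum>(i, j)\<in>?P. F j i)"
    by (rule sum.reindex_cong[of prod.swap]) auto
  also have "(\<Sum>(i, j)\<in>?P. F i j) + (\<Sum>(i, j)\<in>?P. F j i) = (\<Sum>(i, j)\<in>?P. F i j + F j i)"
    unfolding sum.distrib[symmetric] by (rule sum.cong) auto
  finally show ?thesis .
qed

lemma mem_idx_swap: "mem_idx E m k j i = mem_idx E m k i j"
proof -
  have "{j, i} = {i, j}" by (rule insert_commute)
  then show ?thesis unfolding mem_idx_def by simp
qed

lemma rho_swap: "rho f E m \<beta> c1 c2 w alpha k j i = rho f E m \<beta> c1 c2 w alpha k i j"
  unfolding rho_def
  by (simp only: norm_minus_commute[of "conj_grad (f j) (w k j)"]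
      add.commute[of "(norm (wbar f E m \<beta> w alpha k j i - w k j))\<^sup>2"])

lemma safeguard_swap:
  "safeguard S1 L f E m \<beta> c1 c2 w alpha k j i = safeguard S1 L f E m \<beta> c1 c2 w alpha k i j"
  unfolding safeguard_def Let_def rho_swap[of f E m \<beta> c1 c2 w alpha k j i] by (simp add: algebra_simps)

lemma wbar_sum:
  assumes "aa_feasible E m w k i j (alpha k i j) (alpha k j i)"
  shows "wbar f E m \<beta> w alpha k i j + wbar f E m \<beta> w alpha k j i = w k i + w k j"
  using assms unfolding wbar_def aa_feasible_def Let_def mem_idx_swap[of E m k j i]
  by (simp add: algebra_simps)

lemma half_step_sum:
  assumes "aa_feasible E m w k i j (alpha k i j) (alpha k j i)"
  shows "half_step S1 L f E m \<beta> c1 c2 w alpha k i j + half_step S1 L f E m \<beta> c1 c2 w alpha k j i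
         = w k i + w k j"
  using wbar_sum[of E m w k i j alpha f \<beta>, OF assms] unfolding half_step_def safeguard_swap[of S1 L f E m \<beta> c1 c2 w alpha k j i]
  by (simp add: algebra_simps)

text \<open>Only feasibility of the Anderson coefficients enters the descent argument.\<close>
locale fdgm_aa =
  fixes n :: nat and \<mu> L \<beta> c1 c2 :: real and m :: nat and S1 :: bool
    and f :: "nat \<Rightarrow> 'a::euclidean_space \<Rightarrow> ereal"
    and E :: "nat \<Rightarrow> nat set set"
    and h :: "nat \<Rightarrow> nat \<Rightarrow> nat \<Rightarrow> real"
    and w :: "nat \<Rightarrow> nat \<Rightarrow> 'a"
    and alpha :: "nat \<Rightarrow> nat \<Rightarrow> nat \<Rightarrow> nat \<Rightarrow> real"
  assumes f_closed_strongly_convex: "i \<in> {1..n} \<Longrightarrow> proper_lsc_strongly_convex (f i) \<mu>"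
    and L_def: "L = 1 / \<mu>"
    and edges: "\<forall>e\<in>E k. e \<subseteq> {1..n} \<and> card e = 2"
    and h_sym: "{i, j} \<in> E k \<Longrightarrow> h k i j = h k j i"
    and h_nonneg: "{i, j} \<in> E k \<Longrightarrow> 0 \<le> h k i j"
    and h_sum: "i \<in> {1..n} \<Longrightarrow> (\<Sum>j\<in>nbrs E k i. h k i j) \<le> 1"
    and beta: "0 < \<beta>" "\<beta> < 1 / L"
    and c1_pos: "c1 > 0"
    and feasible: "{i, j} \<in> E k \<Longrightarrow> aa_feasible E m w k i j (alpha k i j) (alpha k j i)"
    and update: "i \<in> {1..n} \<Longrightarrow> w (Suc k) i =
               (1 - (\<Sum>j\<in>nbrs E k i. h k i j)) *\<^sub>R w k i
               + (\<Sum>j\<in>nbrs E k i. h k i j *\<^sub>R half_step S1 L f E m \<beta> c1 c2 w alpha k i j)"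
begin

abbreviation half :: "nat \<Rightarrow> nat \<Rightarrow> nat \<Rightarrow> 'a" where
  "half \<equiv> half_step S1 L f E m \<beta> c1 c2 w alpha"

abbreviation grad_gap :: "nat \<Rightarrow> nat \<Rightarrow> nat \<Rightarrow> 'a" where
  "grad_gap k i j \<equiv> conj_grad (f i) (w k i) - conj_grad (f j) (w k j)"

lemma conj_descent_L:
  assumes "i \<in> {1..n}"
  shows "conj (f i) v \<le> conj (f i) u + conj_grad (f i) u \<bullet> (v - u) + L / 2 * (norm (v - u))\<^sup>2"
  using proper_lsc_strongly_convex.conj_descent[OF f_closed_strongly_convex[OF assms], of v u]
  by (simp add: L_def)

lemma safeguarded_step_descent:
  assumes i: "i \<in> {1..n}" and j: "j \<in> {1..n}"
    and safe: "safeguard S1 L f E m \<beta> c1 c2 w alpha k i j"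
  shows "conj (f i) (wbar f E m \<beta> w alpha k i j) - conj (f i) (w k i)
         + (conj (f j) (wbar f E m \<beta> w alpha k j i) - conj (f j) (w k j))
         \<le> - c1 * (norm (grad_gap k i j))\<^sup>2"
proof -
  define bi where "bi = wbar f E m \<beta> w alpha k i j"
  define bj where "bj = wbar f E m \<beta> w alpha k j i"
  have "conj (f i) bi - conj (f i) (w k i) + (conj (f j) bj - conj (f j) (w k j))
        \<le> rho f E m \<beta> c1 c2 w alpha k i j"
  proof (cases S1)
    case True
    then show ?thesis using safe unfolding safeguard_def Let_def bi_def bj_def by simp
  next
    case False
    then have "conj_grad (f i) (w k i) \<bullet> (bi - w k i) + L / 2 * (norm (bi - w k i))\<^sup>2
          + conj_grad (f j) (w k j) \<bullet> (bj - w k j) + L / 2 * (norm (bj - w k j))\<^sup>2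
          \<le> rho f E m \<beta> c1 c2 w alpha k i j"
      using safe unfolding safeguard_def Let_def bi_def bj_def by simp
    then show ?thesis
      using conj_descent_L[OF i, of bi "w k i"] conj_descent_L[OF j, of bj "w k j"] by linarith
  qed
  also have "\<dots> \<le> - c1 * (norm (grad_gap k i j))\<^sup>2" unfolding rho_def by simp
  finally show ?thesis unfolding bi_def bj_def .
qed

lemma gradient_step_descent:
  assumes i: "i \<in> {1..n}" and j: "j \<in> {1..n}"
    and G: "G = conj_grad (f i) u - conj_grad (f j) v"
  shows "conj (f i) (u - \<beta> *\<^sub>R G) - conj (f i) u + (conj (f j) (v + \<beta> *\<^sub>R G) - conj (f j) v)
         \<le> - (\<beta> * (1 - \<beta> * L)) * (norm G)\<^sup>2"
proof -
  have "conj (f i) (u - \<beta> *\<^sub>R G)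
        \<le> conj (f i) u - \<beta> * (conj_grad (f i) u \<bullet> G) + L / 2 * (\<beta>\<^sup>2 * (norm G)\<^sup>2)"
    using conj_descent_L[OF i, of "u - \<beta> *\<^sub>R G" u] by (simp add: power_mult_distrib)
  moreover have "conj (f j) (v + \<beta> *\<^sub>R G)
        \<le> conj (f j) v + \<beta> * (conj_grad (f j) v \<bullet> G) + L / 2 * (\<beta>\<^sup>2 * (norm G)\<^sup>2)"
    using conj_descent_L[OF j, of "v + \<beta> *\<^sub>R G" v] by (simp add: power_mult_distrib)
  moreover have "conj_grad (f i) u \<bullet> G - conj_grad (f j) v \<bullet> G = (norm G)\<^sup>2"
    unfolding G power2_norm_eq_inner by (simp add: inner_diff_left)
  then have "- \<beta> * (conj_grad (f i) u \<bullet> G) + \<beta> * (conj_grad (f j) v \<bullet> G) + L * (\<beta>\<^sup>2 * (norm G)\<^sup>2)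
        = - (\<beta> * (1 - \<beta> * L)) * (norm G)\<^sup>2"
    by (simp add: algebra_simps power2_eq_square)
  ultimately show ?thesis by linarith
qed

lemma half_step_edge_descent:
  assumes "i \<in> {1..n}" "j \<in> {1..n}"
  shows "conj (f i) (half k i j) - conj (f i) (w k i) + (conj (f j) (half k j i) - conj (f j) (w k j))
         \<le> - min (\<beta> * (1 - \<beta> * L)) c1 * (norm (grad_gap k i j))\<^sup>2"
proof (cases "safeguard S1 L f E m \<beta> c1 c2 w alpha k i j")
  case True
  then have "half k i j = wbar f E m \<beta> w alpha k i j" "half k j i = wbar f E m \<beta> w alpha k j i"
    unfolding half_step_def safeguard_swap[of S1 L f E m \<beta> c1 c2 w alpha k j i] by simp_all
  moreover have "- c1 * (norm (grad_gap k i j))\<^sup>2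
      \<le> - min (\<beta> * (1 - \<beta> * L)) c1 * (norm (grad_gap k i j))\<^sup>2"
    by (intro mult_right_mono) auto
  ultimately show ?thesis using safeguarded_step_descent[OF assms True] by simp
next
  case False
  then have "half k i j = w k i - \<beta> *\<^sub>R grad_gap k i j"
      "half k j i = w k j + \<beta> *\<^sub>R grad_gap k i j"
    unfolding half_step_def safeguard_swap[of S1 L f E m \<beta> c1 c2 w alpha k j i]
    by (simp_all add: algebra_simps)
  moreover have "- (\<beta> * (1 - \<beta> * L)) * (norm (grad_gap k i j))\<^sup>2
      \<le> - min (\<beta> * (1 - \<beta> * L)) c1 * (norm (grad_gap k i j))\<^sup>2"
    by (intro mult_right_mono) auto
  ultimately show ?thesis using gradient_step_descent[OF assms refl, where u="w k i" and v="w k j"] by simp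
qed

lemma update_as_increment:
  assumes "i \<in> {1..n}"
  shows "w (Suc k) i = w k i + (\<Sum>j\<in>nbrs E k i. h k i j *\<^sub>R (half k i j - w k i))"
  unfolding update[OF assms]
  by (simp add: scaleR_diff_right sum_subtractf scaleR_left_diff_distrib scaleR_sum_left
      algebra_simps)

lemma sum_iterate_conserved: "(\<Sum>i\<in>{1..n}. w k i) = (\<Sum>i\<in>{1..n}. w 0 i)"
proof (induction k)
  case (Suc k)
  have "(\<Sum>i\<in>{1..n}. w (Suc k) i)
        = (\<Sum>i\<in>{1..n}. w k i) + (\<Sum>i\<in>{1..n}. \<Sum>j\<in>nbrs E k i. h k i j *\<^sub>R (half k i j - w k i))"
    by (simp add: update_as_increment sum.distrib)
  also have "(\<Sum>i\<in>{1..n}. \<Sum>j\<in>nbrs E k i. h k i j *\<^sub>R (half k i j - w k i))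
      = (\<Sum>(i, j)\<in>edge_pairs n (E k).
           h k i j *\<^sub>R (half k i j - w k i) + h k j i *\<^sub>R (half k j i - w k j))"
    by (rule sum_nbrs_eq_sum_edge_pairs[OF edges])
  also have "\<dots> = 0"
  proof (rule sum.neutral, clarify)
    fix i j assume "(i, j) \<in> edge_pairs n (E k)"
    then have e: "{i, j} \<in> E k" by (simp add: edge_pairs_def)
    have "h k i j *\<^sub>R (half k i j - w k i) + h k j i *\<^sub>R (half k j i - w k j)
          = h k i j *\<^sub>R ((half k i j + half k j i) - (w k i + w k j))"
      using h_sym[OF e] by (simp add: algebra_simps)
    also have "\<dots> = 0"
      using half_step_sum[of E m w k i j alpha S1 L f \<beta> c1 c2, OF feasible[OF e]] by simp
    finally show "h k i j *\<^sub>R (half k i j - w k i) + h k j i *\<^sub>R (half k j i - w k j) = 0" .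
  qed
  finally show ?case using Suc.IH by simp
qed simp

lemma conj_update_le:
  assumes i: "i \<in> {1..n}"
  shows "conj (f i) (w (Suc k) i) - conj (f i) (w k i)
         \<le> (\<Sum>j\<in>nbrs E k i. h k i j * (conj (f i) (half k i j) - conj (f i) (w k i)))"
proof -
  have "conj (f i) (w (Suc k) i)
        \<le> (1 - sum (h k i) (nbrs E k i)) * conj (f i) (w k i)
          + (\<Sum>j\<in>nbrs E k i. h k i j * conj (f i) (half k i j))"
    unfolding update[OF i]
    using proper_lsc_strongly_convex.conj_convex_combination[OF f_closed_strongly_convex[OF i]
        finite_nbrs[of E k n, OF edges] _ h_sum[OF i]] h_nonneg
    by (simp add: nbrs_def)
  moreover have "(\<Sum>j\<in>nbrs E k i. h k i j * (conj (f i) (half k i j) - conj (f i) (w k i)))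
      = (\<Sum>j\<in>nbrs E k i. h k i j * conj (f i) (half k i j)) - sum (h k i) (nbrs E k i) * conj (f i) (w k i)"
    by (simp add: right_diff_distrib sum_subtractf sum_distrib_right)
  ultimately show ?thesis by (simp add: algebra_simps)
qed

lemma Dual_descent:
  "Dual n f (w (Suc k)) - Dual n f (w k)
   \<le> - min (\<beta> * (1 - \<beta> * L)) c1
       * (\<Sum>(i, j)\<in>edge_pairs n (E k). h k i j * (norm (grad_gap k i j))\<^sup>2)"
proof -
  let ?\<theta> = "min (\<beta> * (1 - \<beta> * L)) c1"
  let ?\<Delta> = "\<lambda>i v. conj (f i) v - conj (f i) (w k i)"
  have "Dual n f (w (Suc k)) - Dual n f (w k) = (\<Sum>i\<in>{1..n}. ?\<Delta> i (w (Suc k) i))"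
    unfolding Dual_def by (simp add: sum_subtractf)
  also have "\<dots> \<le> (\<Sum>i\<in>{1..n}. \<Sum>j\<in>nbrs E k i. h k i j * ?\<Delta> i (half k i j))"
    by (intro sum_mono conj_update_le)
  also have "\<dots> = (\<Sum>(i, j)\<in>edge_pairs n (E k).
                   h k i j * ?\<Delta> i (half k i j) + h k j i * ?\<Delta> j (half k j i))"
    by (rule sum_nbrs_eq_sum_edge_pairs[OF edges])
  also have "\<dots> \<le> (\<Sum>(i, j)\<in>edge_pairs n (E k). - ?\<theta> * (h k i j * (norm (grad_gap k i j))\<^sup>2))"
  proof (rule sum_mono, clarify)
    fix i j assume "(i, j) \<in> edge_pairs n (E k)"
    then have e: "{i, j} \<in> E k" and ij: "i \<in> {1..n}" "j \<in> {1..n}"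
      by (auto simp: edge_pairs_def)
    have "h k i j * ?\<Delta> i (half k i j) + h k j i * ?\<Delta> j (half k j i)
          = h k i j * (?\<Delta> i (half k i j) + ?\<Delta> j (half k j i))"
      using h_sym[OF e] by (simp add: distrib_left)
    also have "\<dots> \<le> h k i j * (- ?\<theta> * (norm (grad_gap k i j))\<^sup>2)"
      using half_step_edge_descent[OF ij] h_nonneg[OF e] by (intro mult_left_mono) auto
    finally show "h k i j * ?\<Delta> i (half k i j) + h k j i * ?\<Delta> j (half k j i)
        \<le> - ?\<theta> * (h k i j * (norm (grad_gap k i j))\<^sup>2)"
      by (simp add: algebra_simps)
  qed
  also have "\<dots> = - ?\<theta> * (\<Sum>(i, j)\<in>edge_pairs n (E k). h k i j * (norm (grad_gap k i j))\<^sup>2)"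
    by (simp add: sum_distrib_left case_prod_beta)
  finally show ?thesis .
qed

lemma Dual_antimono: "antimono (\<lambda>k. Dual n f (w k))"
  unfolding antimono_iff_le_Suc
proof
  fix k
  have "L > 0" using beta by (metis less_trans zero_less_divide_1_iff)
  then have "min (\<beta> * (1 - \<beta> * L)) c1 \<ge> 0"
    using beta c1_pos by (simp add: field_simps)
  moreover have "(\<Sum>(i, j)\<in>edge_pairs n (E k). h k i j * (norm (grad_gap k i j))\<^sup>2) \<ge> 0"
    by (intro sum_nonneg) (auto simp: edge_pairs_def intro!: mult_nonneg_nonneg h_nonneg)
  ultimately have "0 \<le> min (\<beta> * (1 - \<beta> * L)) c1
      * (\<Sum>(i, j)\<in>edge_pairs n (E k). h k i j * (norm (grad_gap k i j))\<^sup>2)"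
    by (rule mult_nonneg_nonneg)
  then show "Dual n f (w (Suc k)) \<le> Dual n f (w k)"
    using Dual_descent[of k] by simp
qed

end

theorem mainTheorem3:
  fixes n :: nat and \<mu> L \<beta> c1 c2 :: real and m :: nat and S1 :: bool
    and f :: "nat \<Rightarrow> 'a::euclidean_space \<Rightarrow> ereal"
    and E :: "nat \<Rightarrow> nat set set"
    and h :: "nat \<Rightarrow> nat \<Rightarrow> nat \<Rightarrow> real"
    and w :: "nat \<Rightarrow> nat \<Rightarrow> 'a"
    and alpha :: "nat \<Rightarrow> nat \<Rightarrow> nat \<Rightarrow> nat \<Rightarrow> real"
  assumes n_pos: "n \<ge> 1"
    and mu_pos: "\<mu> > 0"
    and f_proper: "\<forall>i\<in>{1..n}. ext_proper (f i)"
    and f_lsc: "\<forall>i\<in>{1..n}. ext_lsc (f i)"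
    and f_sc: "\<forall>i\<in>{1..n}. strongly_convex \<mu> (f i)"
    and dom_int: "interior (\<Inter>i\<in>{1..n}. edom (f i)) \<noteq> {}"
    and L_def: "L = 1 / \<mu>"
    and edges: "\<forall>k. \<forall>e\<in>E k. e \<subseteq> {1..n} \<and> card e = 2"
    and h_sym: "\<forall>k i j. {i, j} \<in> E k \<longrightarrow> h k i j = h k j i"
    and h_low: "\<exists>hl > 0. \<forall>k i j. {i, j} \<in> E k \<longrightarrow> h k i j \<ge> hl"
    and h_sum: "\<forall>k. \<forall>i\<in>{1..n}. (\<Sum>j\<in>nbrs E k i. h k i j) \<le> 1"
    and beta: "0 < \<beta>" "\<beta> < 1 / L"
    and c_pos: "c1 > 0" "c2 > 0"
    and m_pos: "m \<ge> 1"
    and init: "(\<Sum>i\<in>{1..n}. w 0 i) = 0"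
    and aa: "\<forall>k i j. {i, j} \<in> E k \<longrightarrow>
               aa_minimizer f E m w k i j (alpha k i j) (alpha k j i)"
    and update: "\<forall>k. \<forall>i\<in>{1..n}. w (Suc k) i =
               (1 - (\<Sum>j\<in>nbrs E k i. h k i j)) *\<^sub>R w k i
               + (\<Sum>j\<in>nbrs E k i. h k i j *\<^sub>R half_step S1 L f E m \<beta> c1 c2 w alpha k i j)"
  shows "(\<forall>k. (\<Sum>i\<in>{1..n}. w k i) = 0 \<and>
            Dual n f (w (Suc k)) - Dual n f (w k)
              \<le> - min (\<beta> * (1 - \<beta> * L)) c1 *
                 (\<Sum>(i, j)\<in>{(i, j). i \<in> {1..n} \<and> j \<in> {1..n} \<and> i < j \<and> {i, j} \<in> E k}.
                    h k i j * (norm (conj_grad (f i) (w k i) - conj_grad (f j) (w k j)))\<^sup>2))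
         \<and> antimono (\<lambda>k. Dual n f (w k))"
proof -
  have f_closed: "proper_lsc_strongly_convex (f i) \<mu>" if "i \<in> {1..n}" for i
    using that f_proper f_lsc f_sc mu_pos by (simp add: proper_lsc_strongly_convex_def)
  have edges': "\<forall>e\<in>E k. e \<subseteq> {1..n} \<and> card e = 2" for k
    using edges by blast
  have h_sym': "h k i j = h k j i" if "{i, j} \<in> E k" for k i j
    using h_sym that by blast
  have h_nonneg: "0 \<le> h k i j" if "{i, j} \<in> E k" for k i j
    using h_low that by (meson less_le_trans less_imp_le)
  have h_sum': "(\<Sum>j\<in>nbrs E k i. h k i j) \<le> 1" if "i \<in> {1..n}" for k i
    using h_sum that by blast
  have feasible: "aa_feasible E m w k i j (alpha k i j) (alpha k j i)" if "{i, j} \<in> E k" for k i j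
    using aa that by (simp add: aa_minimizer_def)
  have update': "w (Suc k) i = (1 - (\<Sum>j\<in>nbrs E k i. h k i j)) *\<^sub>R w k i
      + (\<Sum>j\<in>nbrs E k i. h k i j *\<^sub>R half_step S1 L f E m \<beta> c1 c2 w alpha k i j)"
    if "i \<in> {1..n}" for k i
    using update that by blast
  interpret fdgm_aa n \<mu> L \<beta> c1 c2 m S1 f E h w alpha
    by (rule fdgm_aa.intro)
      (fact f_closed L_def edges' h_sym' h_nonneg h_sum' beta c_pos(1) feasible update')+
  show ?thesis
    using sum_iterate_conserved init Dual_descent Dual_antimono by (simp add: edge_pairs_def)
qed

end
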